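(* Let $\gamma$ be an admissible path of length $|\gamma|$, let $n\in\mathbb N$ be such that $\theta_n=2\pi/n<|\gamma|$, let $l_n=2\sin\frac{\pi}{n}$, and let $P_n$ be the $\theta_n$-discretization of $\gamma$. Let $\mathcal U$ be the configuration at $\gamma(0)$ with direction $\gamma'(0)$ and $\mathcal V$ the configuration at $\gamma(|\gamma|)$ with direction $\gamma'(|\gamma|)$ (i.e. with vectors $l_n\gamma'(0)$ and $l_n\gamma'(|\gamma|)$). Then $P_n$ is a discrete curvature-constrained path with parameters $\theta_n$ and $l_n$ that starts at $\mathcal U$ and ends at $\mathcal V$.
   Context: An admissible path is a continuously differentiable planar curve $\gamma:[0,|\gamma|]\to\mathbb R^2$ parameterized by arclength such that for all $t<s<t+\pi$ in its domain the angle between $\gamma'(s)$ and $\gamma'(t)$ is at most $s-t$. For $0<\theta<|\gamma|$ write $|\gamma|=m\theta+\delta$ with $m=\lfloor|\gamma|/\theta\rfloor$, $0\le\delta<\theta$. The $\theta$-discretization of $\gamma$ is the polygonal path with vertices $P_i=\gamma(t_i)$, $i=0,\dots,k$, where: if $\delta=0$, then $k=m$ and $t_i=i\theta$; if $\delta>0$, then $k=m+2$, $t_0=0$, $t_1=\delta/2$, $t_i-t_{i-1}=\theta$ for $i=2,\dots,m+1$, and $t_{m+2}=|\gamma|$ (so $t_{m+2}-t_{m+1}=\delta/2$). Discrete curvature-constrained paths with parameters $\theta$ (an angle) and $\ell>0$ (a length): for a polygonal path, the turn at an internal vertex is the angle in $[0,\pi]$ between the directions of the incoming and outgoing edges; an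 edge is short if its length is $<\ell$; an edge with an adjacent edge at each end is an inflection edge if the two adjacent edges lie on opposite sides of its supporting line. The path is a discrete curvature-constrained path with parameters $\theta,\ell$ if (i) every turn is at most $\theta$; (ii) no two adjacent edges are both short; (iii) for every short non-inflection edge $ab$ with adjacent edges $a^-a$, $bb^+$, the angle between the directions of $\overrightarrow{a^-a}$ and $\overrightarrow{bb^+}$ is at most $\theta$. A configuration is a pair $(u,U)$ of a point and a vector of length $\ell$; a path with first vertex $u$ starts at $(u,U)$ if prepending the segment from $u-U$ to $u$ gives a discrete curvature-constrained path, and a path with last vertex $v$ ends at $(v,V)$ if appending the segment from $v$ to $v+V$ gives a discrete curvature-constrained path. *)

theory Defs
  imports "HOL-Analysis.Analysis"
begin

definition vec_angle :: "real^2 \<Rightarrow> real^2 \<Rightarrow> real" where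
  "vec_angle u v = arccos ((u \<bullet> v) / (norm u * norm v))"

definition cross2 :: "real^2 \<Rightarrow> real^2 \<Rightarrow> real" where
  "cross2 u v = u$1 * v$2 - u$2 * v$1"

definition admissible :: "real \<Rightarrow> (real \<Rightarrow> real^2) \<Rightarrow> (real \<Rightarrow> real^2) \<Rightarrow> bool" where
  "admissible L \<gamma> D \<longleftrightarrow>
     0 < L \<and>
     (\<forall>t\<in>{0..L}. (\<gamma> has_vector_derivative D t) (at t within {0..L})) \<and>
     continuous_on {0..L} D \<and>
     (\<forall>t\<in>{0..L}. norm (D t) = 1) \<and>
     (\<forall>t s. t \<in> {0..L} \<longrightarrow> s \<in> {0..L} \<longrightarrow> t < s \<longrightarrow> s < t + pi \<longrightarrow>
        vec_angle (D s) (D t) \<le> s - t)"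

definition discretization :: "real \<Rightarrow> real \<Rightarrow> (real \<Rightarrow> real^2) \<Rightarrow> (real^2) list" where
  "discretization \<theta> L \<gamma> =
     (let m = nat \<lfloor>L / \<theta>\<rfloor>; \<delta> = L - real m * \<theta> in
      if \<delta> = 0 then map (\<lambda>i. \<gamma> (real i * \<theta>)) [0..<m+1]
      else [\<gamma> 0] @ map (\<lambda>i. \<gamma> (\<delta> / 2 + real i * \<theta>)) [0..<m+1] @ [\<gamma> L])"

definition short_edge :: "real \<Rightarrow> real^2 \<Rightarrow> real^2 \<Rightarrow> bool" where
  "short_edge l a b \<longleftrightarrow> norm (b - a) < l"

text \<open>Edge ab with adjacent edges a'a and bb' is an inflection edge if the adjacent edges
  lie (strictly) on opposite sides of the line through a and b.\<close>
definition inflection_edge :: "real^2 \<Rightarrow> real^2 \<Rightarrow> real^2 \<Rightarrow> real^2 \<Rightarrow> bool" where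
  "inflection_edge a' a b b' \<longleftrightarrow> cross2 (b - a) (a' - a) * cross2 (b - a) (b' - a) < 0"

definition dccp :: "real \<Rightarrow> real \<Rightarrow> (real^2) list \<Rightarrow> bool" where
  "dccp \<theta> l ps \<longleftrightarrow>
     (\<forall>i. 0 < i \<and> i + 1 < length ps \<longrightarrow>
        vec_angle (ps!i - ps!(i-1)) (ps!(i+1) - ps!i) \<le> \<theta>) \<and>
     (\<forall>i. i + 2 < length ps \<longrightarrow>
        \<not> (short_edge l (ps!i) (ps!(i+1)) \<and> short_edge l (ps!(i+1)) (ps!(i+2)))) \<and>
     (\<forall>i. 0 < i \<and> i + 2 < length ps \<longrightarrow>
        short_edge l (ps!i) (ps!(i+1)) \<longrightarrow>
        \<not> inflection_edge (ps!(i-1)) (ps!i) (ps!(i+1)) (ps!(i+2)) \<longrightarrow>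
        vec_angle (ps!i - ps!(i-1)) (ps!(i+2) - ps!(i+1)) \<le> \<theta>)"

definition starts_at :: "real \<Rightarrow> real \<Rightarrow> (real^2) list \<Rightarrow> real^2 \<Rightarrow> real^2 \<Rightarrow> bool" where
  "starts_at \<theta> l ps u U \<longleftrightarrow> ps \<noteq> [] \<and> hd ps = u \<and> dccp \<theta> l ((u - U) # ps)"

definition ends_at :: "real \<Rightarrow> real \<Rightarrow> (real^2) list \<Rightarrow> real^2 \<Rightarrow> real^2 \<Rightarrow> bool" where
  "ends_at \<theta> l ps v V \<longleftrightarrow> ps \<noteq> [] \<and> last ps = v \<and> dccp \<theta> l (ps @ [v + V])"

end

theory Submission
  imports Defs
begin

text \<open>Integrating the angle condition shows that over a parameter interval \<open>[a, b]\<close> of length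
  less than \<open>pi\<close> the chord \<open>\<gamma> b - \<gamma> a\<close> lies within angle \<open>(b - a)/2\<close> of both \<open>\<gamma>' a\<close> and
  \<open>\<gamma>' b\<close>, and has length at least \<open>2 sin ((b - a)/2)\<close>. In the discretization all parameter
  gaps are \<open>\<theta>\<close> except the two end gaps, which are at most \<open>\<theta>/2\<close>. Regard the configuration
  vectors as edges with parameter gap zero. By the triangle inequality for angles every turn is at
  most half the sum of the two adjacent gaps, hence at most \<open>\<theta>\<close>; an edge with gap \<open>\<theta>\<close> has
  length at least \<open>l = 2 sin (\<theta>/2)\<close>, so only the separated end edges can be short, and across
  such an edge the direction turns by at most \<open>0 + \<theta>/2 + \<theta>/2\<close>.\<close>

lemma inner_real2: "(v::real^2) \<bullet> w = v$1 * w$1 + v$2 * w$2"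
  by (simp add: inner_vec_def sum_2)

lemma norm_real2_squared: "(norm (v::real^2))\<^sup>2 = (v$1)\<^sup>2 + (v$2)\<^sup>2"
  unfolding power2_norm_eq_inner by (simp add: inner_real2 power2_eq_square)

lemma inner_cross2_squared:
  assumes "norm (u::real^2) = 1"
  shows "(v \<bullet> u)\<^sup>2 + (cross2 u v)\<^sup>2 = (norm v)\<^sup>2"
proof -
  have "(v \<bullet> u)\<^sup>2 + (cross2 u v)\<^sup>2 = ((u$1)\<^sup>2 + (u$2)\<^sup>2) * ((v$1)\<^sup>2 + (v$2)\<^sup>2)"
    by (simp add: inner_real2 cross2_def power2_eq_square algebra_simps)
  then show ?thesis
    using assms norm_real2_squared[of u] norm_real2_squared[of v] by simp
qed

lemma inner_eq_inner_cross2: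
  assumes "norm (u::real^2) = 1"
  shows "v \<bullet> w = (v \<bullet> u) * (w \<bullet> u) + cross2 u v * cross2 u w"
proof -
  have "(v \<bullet> u) * (w \<bullet> u) + cross2 u v * cross2 u w = ((u$1)\<^sup>2 + (u$2)\<^sup>2) * (v \<bullet> w)"
    by (simp add: inner_real2 cross2_def power2_eq_square algebra_simps)
  then show ?thesis
    using assms norm_real2_squared[of u] by simp
qed

lemma cross2_eq_inner: "cross2 u v = (\<chi> i. if i = 1 then - u$2 else u$1) \<bullet> v"
  by (simp add: cross2_def inner_real2)

lemma abs_cos_vec_angle_arg: "\<bar>(u \<bullet> v) / (norm u * norm v)\<bar> \<le> 1"
proof (cases "u = 0 \<or> v = 0")
  case False
  then have "0 < norm u * norm v" by simp
  then show ?thesis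
    using Cauchy_Schwarz_ineq2[of u v] by (simp add: abs_divide)
qed auto

lemma cos_vec_angle_arg_bounds:
  "- 1 \<le> (u \<bullet> v) / (norm u * norm v) \<and> (u \<bullet> v) / (norm u * norm v) \<le> 1"
  using abs_cos_vec_angle_arg[of u v] unfolding abs_le_iff by linarith

lemma cos_vec_angle: "cos (vec_angle u v) = (u \<bullet> v) / (norm u * norm v)"
  unfolding vec_angle_def by (rule cos_arccos_abs[OF abs_cos_vec_angle_arg])

lemma vec_angle_nonneg: "0 \<le> vec_angle u v"
  using cos_vec_angle_arg_bounds[of u v] unfolding vec_angle_def by (intro arccos_lbound) auto

lemma vec_angle_le_pi: "vec_angle u v \<le> pi"
  using cos_vec_angle_arg_bounds[of u v] unfolding vec_angle_def by (intro arccos_ubound) auto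

lemma vec_angle_commute: "vec_angle u v = vec_angle v u"
  by (simp add: vec_angle_def inner_commute mult.commute)

lemma vec_angle_uminus [simp]: "vec_angle (- u) (- v) = vec_angle u v"
  by (simp add: vec_angle_def)

lemma vec_angle_scaleR_right: "0 < c \<Longrightarrow> vec_angle u (c *\<^sub>R v) = vec_angle u v"
  by (simp add: vec_angle_def)

lemma vec_angle_scaleR_left: "0 < c \<Longrightarrow> vec_angle (c *\<^sub>R u) v = vec_angle u v"
  by (simp add: vec_angle_def)

lemma vec_angle_refl: "v \<noteq> 0 \<Longrightarrow> vec_angle v v = 0"
  by (simp add: vec_angle_def power2_norm_eq_inner[symmetric] power2_eq_square)

lemma vec_angle_zero_right [simp]: "vec_angle u 0 = pi / 2"
  by (simp add: vec_angle_def)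

lemma vec_angle_zero_left [simp]: "vec_angle 0 v = pi / 2"
  by (simp add: vec_angle_def)

lemma cos_le_inner_of_vec_angle_le:
  assumes "norm u = 1" "norm d = 1" "vec_angle u d \<le> h" "h \<le> pi"
  shows "cos h \<le> d \<bullet> u"
proof -
  have "cos h \<le> cos (vec_angle u d)"
    using assms vec_angle_nonneg by (intro cos_monotone_0_pi_le) auto
  then show ?thesis
    using assms by (simp add: cos_vec_angle inner_commute)
qed

lemma unit_circle_polar:
  assumes "x\<^sup>2 + y\<^sup>2 = 1"
  obtains \<alpha> where "\<bar>\<alpha>\<bar> \<le> pi" "x = cos \<alpha>" "y = sin \<alpha>"
proof (cases "0 \<le> y")
  case True
  then show ?thesis
    using sincos_total_pi[OF True assms] that by force
next
  case False
  then obtain \<alpha> where "0 \<le> \<alpha>" "\<alpha> \<le> pi" "x = cos \<alpha>" "- y = sin \<alpha>"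
    using sincos_total_pi[of "- y" x] assms by auto
  then show ?thesis
    using that[of "- \<alpha>"] by auto
qed

lemma arccos_cos_abs: "\<bar>t\<bar> \<le> pi \<Longrightarrow> arccos (cos t) = \<bar>t\<bar>"
  by (cases "t < 0") (simp_all add: arccos_cos arccos_cos2)

lemma arccos_cos_le_abs: "arccos (cos t) \<le> \<bar>t\<bar>"
  using arccos_cos_abs[of t] arccos_ubound[of "cos t"] by (cases "\<bar>t\<bar> \<le> pi") auto

lemma polar_angle:
  assumes a: "norm a = 1" and v: "v \<noteq> 0"
  obtains \<alpha> where "\<bar>\<alpha>\<bar> \<le> pi" "v \<bullet> a = norm v * cos \<alpha>" "cross2 a v = norm v * sin \<alpha>"
proof -
  have "(v \<bullet> a / norm v)\<^sup>2 + (cross2 a v / norm v)\<^sup>2 = 1"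
    using inner_cross2_squared[OF a, of v] v by (simp add: power_divide add_divide_distrib[symmetric])
  then obtain \<alpha> where "\<bar>\<alpha>\<bar> \<le> pi" "v \<bullet> a / norm v = cos \<alpha>" "cross2 a v / norm v = sin \<alpha>"
    by (rule unit_circle_polar)
  then show ?thesis
    using that v by (simp add: field_simps)
qed

lemma vec_angle_triangle_unit:
  fixes a v w :: "real^2"
  assumes a: "norm a = 1"
  shows "vec_angle v w \<le> vec_angle v a + vec_angle a w"
proof (cases "v = 0 \<or> w = 0")
  case True
  then show ?thesis
    using vec_angle_nonneg[of v a] vec_angle_nonneg[of a w] by auto
next
  case False
  then have v: "v \<noteq> 0" and w: "w \<noteq> 0" by auto
  have angle_polar: "vec_angle a x = \<bar>\<gamma>\<bar>"
    if "\<bar>\<gamma>\<bar> \<le> pi" "x \<bullet> a = norm x * cos \<gamma>" "x \<noteq> 0" for x \<gamma>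
  proof -
    have "vec_angle a x = arccos (cos \<gamma>)"
      using that a by (simp add: vec_angle_def inner_commute)
    then show ?thesis
      using that by (simp add: arccos_cos_abs)
  qed
  obtain \<alpha> where \<alpha>: "\<bar>\<alpha>\<bar> \<le> pi" "v \<bullet> a = norm v * cos \<alpha>" "cross2 a v = norm v * sin \<alpha>"
    using polar_angle[OF a v] .
  obtain \<beta> where \<beta>: "\<bar>\<beta>\<bar> \<le> pi" "w \<bullet> a = norm w * cos \<beta>" "cross2 a w = norm w * sin \<beta>"
    using polar_angle[OF a w] .
  have "v \<bullet> w = (norm v * norm w) * cos (\<alpha> - \<beta>)"
    unfolding inner_eq_inner_cross2[OF a, of v w] \<alpha>(2,3) \<beta>(2,3) cos_diff by algebra
  then have "vec_angle v w = arccos (cos (\<alpha> - \<beta>))"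
    using v w by (simp add: vec_angle_def)
  also have "\<dots> \<le> \<bar>\<alpha> - \<beta>\<bar>"
    by (rule arccos_cos_le_abs)
  also have "\<dots> \<le> \<bar>\<alpha>\<bar> + \<bar>\<beta>\<bar>"
    by linarith
  also have "\<dots> = vec_angle v a + vec_angle a w"
    using angle_polar[OF \<alpha>(1,2) v] angle_polar[OF \<beta>(1,2) w] by (simp add: vec_angle_commute[of v])
  finally show ?thesis .
qed

text \<open>With the junk value \<open>vec_angle 0 v = pi/2\<close> the triangle inequality holds without
  side conditions.\<close>

lemma vec_angle_triangle:
  fixes u v w :: "real^2"
  shows "vec_angle v w \<le> vec_angle v u + vec_angle u w"
proof (cases "u = 0")
  case True
  then show ?thesis
    using vec_angle_le_pi[of v w] by simp
next
  case False
  then have "0 < inverse (norm u)" by simp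
  then show ?thesis
    using vec_angle_triangle_unit[of "sgn u" v w] False
    by (simp add: sgn_div_norm divide_inverse vec_angle_scaleR_left vec_angle_scaleR_right)
qed

lemma vec_angle_le_of_cross2_bound:
  assumes u: "norm u = 1" and X: "0 < c \<bullet> u" and h: "0 \<le> h" "h \<le> pi / 2"
    and cone: "\<bar>cross2 u c\<bar> * cos h \<le> sin h * (c \<bullet> u)"
  shows "vec_angle u c \<le> h"
proof -
  have "c \<noteq> 0" using X by auto
  have cos_h: "0 \<le> cos h" using h by (intro cos_ge_zero) auto
  have "(cos h * norm c)\<^sup>2 = (cos h)\<^sup>2 * (c \<bullet> u)\<^sup>2 + (\<bar>cross2 u c\<bar> * cos h)\<^sup>2"
    unfolding power_mult_distrib inner_cross2_squared[OF u, of c, symmetric]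
    by (simp add: algebra_simps)
  also have "\<dots> \<le> (cos h)\<^sup>2 * (c \<bullet> u)\<^sup>2 + (sin h * (c \<bullet> u))\<^sup>2"
    using cone cos_h by (intro add_left_mono power_mono) auto
  also have "\<dots> = (c \<bullet> u)\<^sup>2"
    by (simp add: power_mult_distrib distrib_right[symmetric])
  finally have "cos h * norm c \<le> c \<bullet> u"
    using X by (simp add: power2_le_iff_abs_le)
  then have "cos h \<le> (u \<bullet> c) / (norm u * norm c)"
    using u \<open>c \<noteq> 0\<close> by (simp add: pos_le_divide_eq inner_commute)
  then have "vec_angle u c \<le> arccos (cos h)"
    unfolding vec_angle_def using cos_vec_angle_arg_bounds[of u c] by (intro arccos_le_arccos) auto
  then show ?thesis
    using h by (simp add: arccos_cos)
qed

lemma unit_vector_component_le: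
  fixes x y w h :: real
  assumes xy: "x\<^sup>2 + y\<^sup>2 = 1" and xw: "cos w \<le> x" and w: "0 \<le> w" "w \<le> 2 * h"
    and h: "h < pi / 2"
  shows "cos h * y - sin h * x \<le> sin (w - h)"
proof -
  obtain \<alpha> where \<alpha>: "\<bar>\<alpha>\<bar> \<le> pi" "x = cos \<alpha>" "y = sin \<alpha>"
    using unit_circle_polar[OF xy] .
  have "cos w \<le> cos \<bar>\<alpha>\<bar>" using xw \<alpha> by (simp add: abs_if)
  then have "\<bar>\<alpha>\<bar> \<le> w"
    using cos_mono_le_eq[of w "\<bar>\<alpha>\<bar>"] \<alpha> w h by linarith
  have "sin (w - h) - (cos h * y - sin h * x) = sin (w - h) - sin (\<alpha> - h)"
    using \<alpha> by (simp add: sin_diff)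
  also have "\<dots> = 2 * sin ((w - \<alpha>) / 2) * cos ((w + \<alpha> - 2 * h) / 2)"
    by (simp add: sin_diff_sin algebra_simps diff_divide_distrib add_divide_distrib)
  also have "\<dots> \<ge> 0"
  proof -
    have "0 \<le> sin ((w - \<alpha>) / 2)"
      using \<open>\<bar>\<alpha>\<bar> \<le> w\<close> w h by (intro sin_ge_zero) auto
    moreover have "0 \<le> cos ((w + \<alpha> - 2 * h) / 2)"
      using \<open>\<bar>\<alpha>\<bar> \<le> w\<close> w h by (intro cos_ge_zero) auto
    ultimately show ?thesis by simp
  qed
  finally show ?thesis by simp
qed

lemma admissible_unit_derivative:
  "admissible L \<gamma> D \<Longrightarrow> t \<in> {0..L} \<Longrightarrow> norm (D t) = 1"
  by (simp add: admissible_def)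

lemma admissible_angle_le:
  assumes adm: "admissible L \<gamma> D" and t: "t \<in> {0..L}" and s: "s \<in> {0..L}"
    and ts: "\<bar>s - t\<bar> < pi"
  shows "vec_angle (D t) (D s) \<le> \<bar>s - t\<bar>"
proof (cases s t rule: linorder_cases)
  case less
  then show ?thesis
    using adm t s ts by (auto simp: admissible_def)
next
  case equal
  have "D t \<noteq> 0"
    using admissible_unit_derivative[OF adm t] by auto
  then show ?thesis
    using equal by (simp add: vec_angle_refl)
next
  case greater
  then show ?thesis
    using adm t s ts by (auto simp: admissible_def vec_angle_commute)
qed

lemma admissible_has_integral:
  assumes adm: "admissible L \<gamma> D" and ab: "0 \<le> a" "a \<le> b" "b \<le> L"
  shows "(D has_integral (\<gamma> b - \<gamma> a)) {a..b}"
proof (rule fundamental_theorem_of_calculus[OF ab(2)])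
  fix t assume "t \<in> {a..b}"
  then have "(\<gamma> has_vector_derivative D t) (at t within {0..L})"
    using adm ab by (auto simp: admissible_def)
  then show "(\<gamma> has_vector_derivative D t) (at t within {a..b})"
    by (rule has_vector_derivative_within_subset) (use ab in auto)
qed

lemma admissible_reverse:
  assumes adm: "admissible L \<gamma> D"
  shows "admissible L (\<lambda>t. \<gamma> (L - t)) (\<lambda>t. - D (L - t))"
proof -
  have flip: "(\<lambda>t. L - t) ` {0..L} = {0..L}"
    by (auto simp: image_iff intro: exI[of _ "L - _"])
  have "((\<lambda>t. \<gamma> (L - t)) has_vector_derivative - D (L - t)) (at t within {0..L})"
    if t: "t \<in> {0..L}" for t
  proof -
    have "((\<lambda>t. L - t) has_vector_derivative - 1) (at t within {0..L})"
      by (auto intro!: derivative_eq_intros)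
    moreover have "(\<gamma> has_vector_derivative D (L - t)) (at (L - t) within (\<lambda>t. L - t) ` {0..L})"
      unfolding flip using adm t by (simp add: admissible_def)
    ultimately have "((\<gamma> \<circ> (\<lambda>t. L - t)) has_vector_derivative (- 1) *\<^sub>R D (L - t)) (at t within {0..L})"
      by (rule vector_diff_chain_within)
    then show ?thesis
      by (simp add: o_def)
  qed
  moreover have "continuous_on {0..L} (\<lambda>t. - D (L - t))"
  proof -
    have "continuous_on {0..L} (D \<circ> (\<lambda>t. L - t))"
      using adm flip unfolding admissible_def
      by (intro continuous_on_compose) (auto intro: continuous_intros)
    then show ?thesis
      by (intro continuous_on_minus) (simp add: o_def)
  qed
  moreover have "vec_angle (- D (L - s)) (- D (L - t)) \<le> s - t"
    if "t \<in> {0..L}" "s \<in> {0..L}" "t < s" "s < t + pi" for s t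
    using admissible_angle_le[OF adm, of "L - t" "L - s"] that by (simp add: vec_angle_commute)
  ultimately show ?thesis
    using adm by (simp add: admissible_def)
qed

lemma has_integral_cos_shift:
  fixes a b :: real
  assumes "a \<le> b"
  shows "((\<lambda>t. cos (t - a)) has_integral sin (b - a)) {a..b}"
proof -
  have "((\<lambda>t. cos (t - a)) has_integral sin (b - a) - sin (a - a)) {a..b}"
    using assms
    by (intro fundamental_theorem_of_calculus)
       (auto simp: has_real_derivative_iff_has_vector_derivative[symmetric]
             intro!: derivative_eq_intros)
  then show ?thesis by simp
qed

lemma has_integral_sin_centred:
  fixes a b :: real
  assumes "a \<le> b"
  shows "((\<lambda>t. sin (t - a - (b - a) / 2)) has_integral 0) {a..b}"
proof -
  have "((\<lambda>t. sin (t - a - (b - a) / 2)) has_integral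
      - cos (b - a - (b - a) / 2) - - cos (a - a - (b - a) / 2)) {a..b}"
    using assms
    by (intro fundamental_theorem_of_calculus)
       (auto simp: has_real_derivative_iff_has_vector_derivative[symmetric]
             intro!: derivative_eq_intros)
  moreover have "b - a - (b - a) / 2 = - (a - a - (b - a) / 2)"
    by (simp add: field_simps)
  ultimately show ?thesis
    by (simp only: cos_minus) simp
qed

lemma admissible_inner_ge_cos:
  assumes adm: "admissible L \<gamma> D" and t: "0 \<le> a" "a \<le> t" "t \<le> L" "t - a < pi"
  shows "cos (t - a) \<le> D t \<bullet> D a"
proof -
  have "vec_angle (D a) (D t) \<le> t - a"
    using admissible_angle_le[OF adm, of a t] t by simp
  then show ?thesis
    using admissible_unit_derivative[OF adm] t by (intro cos_le_inner_of_vec_angle_le) auto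
qed

lemma chord_inner_start:
  assumes adm: "admissible L \<gamma> D" and ab: "0 \<le> a" "a \<le> b" "b \<le> L" "b - a < pi"
  shows "sin (b - a) \<le> (\<gamma> b - \<gamma> a) \<bullet> D a"
proof (rule has_integral_le[OF has_integral_cos_shift[OF ab(2)]])
  show "((\<lambda>t. D t \<bullet> D a) has_integral (\<gamma> b - \<gamma> a) \<bullet> D a) {a..b}"
    using has_integral_linear[OF admissible_has_integral[OF adm ab(1-3)] bounded_linear_inner_left]
    by (simp add: o_def)
qed (use admissible_inner_ge_cos[OF adm] ab in auto)

text \<open>The chord \<open>c = \<gamma> b - \<gamma> a\<close> is the integral of \<open>D\<close>, and \<open>D t\<close> is within angle
  \<open>t - a\<close> of \<open>D a\<close>. The components of \<open>D t\<close> along the two normals of the cone of half-angle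
  \<open>h = (b - a)/2\<close> about \<open>D a\<close> are at most \<open>sin (t - a - h)\<close>, which integrates to zero,
  so \<open>c\<close> lies in that cone.\<close>

lemma chord_cross2_start:
  assumes adm: "admissible L \<gamma> D" and ab: "0 \<le> a" "a \<le> b" "b \<le> L" "b - a < pi"
  shows "\<bar>cross2 (D a) (\<gamma> b - \<gamma> a)\<bar> * cos ((b - a) / 2) \<le> sin ((b - a) / 2) * ((\<gamma> b - \<gamma> a) \<bullet> D a)"
proof -
  define u c h where "u = D a" and "c = \<gamma> b - \<gamma> a" and "h = (b - a) / 2"
  have u: "norm u = 1"
    using admissible_unit_derivative[OF adm] ab by (simp add: u_def)
  have int_D: "(D has_integral c) {a..b}"
    unfolding c_def using admissible_has_integral[OF adm ab(1-3)] .
  have normal: "cos h * (\<sigma> * cross2 u c) - sin h * (c \<bullet> u) \<le> 0" if \<sigma>: "\<sigma> = 1 \<or> \<sigma> = - 1" for \<sigma>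
  proof (rule has_integral_le)
    show "((\<lambda>t. cos h * (\<sigma> * cross2 u (D t)) - sin h * (D t \<bullet> u)) has_integral
        cos h * (\<sigma> * cross2 u c) - sin h * (c \<bullet> u)) {a..b}"
      using has_integral_linear[OF int_D bounded_linear_inner_left[of u]]
        has_integral_linear[OF int_D bounded_linear_inner_right]
      by (intro has_integral_diff has_integral_mult_right) (simp_all add: o_def cross2_eq_inner)
    show "((\<lambda>t. sin (t - a - h)) has_integral 0) {a..b}"
      unfolding h_def using has_integral_sin_centred[OF ab(2)] .
    fix t assume t: "t \<in> {a..b}"
    have "(D t \<bullet> u)\<^sup>2 + (\<sigma> * cross2 u (D t))\<^sup>2 = 1"
      using inner_cross2_squared[OF u, of "D t"] admissible_unit_derivative[OF adm] t ab \<sigma> by auto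
    then show "cos h * (\<sigma> * cross2 u (D t)) - sin h * (D t \<bullet> u) \<le> sin (t - a - h)"
      using admissible_inner_ge_cos[OF adm, of a t] t ab
      by (intro unit_vector_component_le) (auto simp: u_def h_def)
  qed
  show ?thesis
    using normal[of 1] normal[of "- 1"] by (simp add: abs_if algebra_simps u_def c_def h_def)
qed

lemma chord_start:
  assumes adm: "admissible L \<gamma> D" and ab: "0 \<le> a" "a < b" "b \<le> L" "b - a < pi"
  shows "sin (b - a) \<le> (\<gamma> b - \<gamma> a) \<bullet> D a"
    and "vec_angle (D a) (\<gamma> b - \<gamma> a) \<le> (b - a) / 2"
proof -
  show inner: "sin (b - a) \<le> (\<gamma> b - \<gamma> a) \<bullet> D a"
    using chord_inner_start[OF adm] ab by simp
  have "0 < sin (b - a)"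
    using ab by (intro sin_gt_zero) auto
  then show "vec_angle (D a) (\<gamma> b - \<gamma> a) \<le> (b - a) / 2"
    using chord_cross2_start[OF adm] admissible_unit_derivative[OF adm] inner ab
    by (intro vec_angle_le_of_cross2_bound) auto
qed

lemma chord_end:
  assumes adm: "admissible L \<gamma> D" and ab: "0 \<le> a" "a < b" "b \<le> L" "b - a < pi"
  shows "sin (b - a) \<le> (\<gamma> b - \<gamma> a) \<bullet> D b"
    and "vec_angle (D b) (\<gamma> b - \<gamma> a) \<le> (b - a) / 2"
proof -
  have reversed: "\<gamma> (L - (L - a)) - \<gamma> (L - (L - b)) = - (\<gamma> b - \<gamma> a)"
    "- D (L - (L - b)) = - D b" "L - a - (L - b) = b - a"
    by simp_all
  note chord = chord_start[OF admissible_reverse[OF adm], of "L - b" "L - a", unfolded reversed]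
  show "sin (b - a) \<le> (\<gamma> b - \<gamma> a) \<bullet> D b"
    using chord(1) ab by (simp add: inner_diff_left)
  show "vec_angle (D b) (\<gamma> b - \<gamma> a) \<le> (b - a) / 2"
    using chord(2) vec_angle_uminus[of "D b" "\<gamma> b - \<gamma> a"] ab by simp
qed

lemma chord_length_ge:
  assumes adm: "admissible L \<gamma> D" and ab: "0 \<le> a" "a < b" "b \<le> L" "b - a \<le> pi"
  shows "2 * sin ((b - a) / 2) \<le> norm (\<gamma> b - \<gamma> a)"
proof -
  define m where "m = (a + b) / 2"
  have m: "a < m" "m < b" "m - a = (b - a) / 2" "b - m = (b - a) / 2"
    using ab by (auto simp: m_def field_simps)
  have "sin ((b - a) / 2) \<le> (\<gamma> m - \<gamma> a) \<bullet> D m"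
    using chord_end(1)[OF adm ab(1) m(1)] m ab by simp
  moreover have "sin ((b - a) / 2) \<le> (\<gamma> b - \<gamma> m) \<bullet> D m"
    using chord_start(1)[OF adm _ m(2) ab(3)] m ab by simp
  ultimately have "2 * sin ((b - a) / 2) \<le> (\<gamma> b - \<gamma> a) \<bullet> D m"
    by (simp add: inner_diff_left)
  also have "\<dots> \<le> norm (\<gamma> b - \<gamma> a) * norm (D m)"
    by (rule norm_cauchy_schwarz)
  also have "norm (D m) = 1"
    using admissible_unit_derivative[OF adm] m ab by simp
  finally show ?thesis by simp
qed

lemma dccp_take: "dccp \<theta> l ps \<Longrightarrow> dccp \<theta> l (take n ps)"
  unfolding dccp_def by (auto simp: less_imp_diff_less)

lemma dccp_drop: "dccp \<theta> l ps \<Longrightarrow> dccp \<theta> l (drop n ps)"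
  unfolding dccp_def
proof (elim conjE, intro conjI allI impI)
  fix i
  assume turn: "\<forall>i. 0 < i \<and> i + 1 < length ps \<longrightarrow>
      vec_angle (ps ! i - ps ! (i - 1)) (ps ! (i + 1) - ps ! i) \<le> \<theta>"
    and i: "0 < i \<and> i + 1 < length (drop n ps)"
  then have "n + (i - 1) = n + i - 1" "n \<le> length ps" "0 < n + i" by auto
  then show "vec_angle (drop n ps ! i - drop n ps ! (i - 1)) (drop n ps ! (i + 1) - drop n ps ! i) \<le> \<theta>"
    using turn[rule_format, of "n + i"] i by (auto simp: nth_drop add.assoc)
next
  fix i
  assume short: "\<forall>i. i + 2 < length ps \<longrightarrow>
      \<not> (short_edge l (ps ! i) (ps ! (i + 1)) \<and> short_edge l (ps ! (i + 1)) (ps ! (i + 2)))"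
    and i: "i + 2 < length (drop n ps)"
  then show "\<not> (short_edge l (drop n ps ! i) (drop n ps ! (i + 1))
      \<and> short_edge l (drop n ps ! (i + 1)) (drop n ps ! (i + 2)))"
    using short[rule_format, of "n + i"] by (auto simp: nth_drop add.assoc)
next
  fix i
  assume flat: "\<forall>i. 0 < i \<and> i + 2 < length ps \<longrightarrow> short_edge l (ps ! i) (ps ! (i + 1)) \<longrightarrow>
      \<not> inflection_edge (ps ! (i - 1)) (ps ! i) (ps ! (i + 1)) (ps ! (i + 2)) \<longrightarrow>
      vec_angle (ps ! i - ps ! (i - 1)) (ps ! (i + 2) - ps ! (i + 1)) \<le> \<theta>"
    and i: "0 < i \<and> i + 2 < length (drop n ps)"
  then have "n + (i - 1) = n + i - 1" "n \<le> length ps" "0 < n + i" by auto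
  then show "short_edge l (drop n ps ! i) (drop n ps ! (i + 1)) \<Longrightarrow>
      \<not> inflection_edge (drop n ps ! (i - 1)) (drop n ps ! i) (drop n ps ! (i + 1)) (drop n ps ! (i + 2)) \<Longrightarrow>
      vec_angle (drop n ps ! i - drop n ps ! (i - 1)) (drop n ps ! (i + 2) - drop n ps ! (i + 1)) \<le> \<theta>"
    using flat[rule_format, of "n + i"] i by (auto simp: nth_drop add.assoc)
qed

lemma dccp_of_pi_le:
  assumes "pi \<le> \<theta>" "l \<le> 0"
  shows "dccp \<theta> l ps"
proof -
  have "\<not> short_edge l a b" for a b
    unfolding short_edge_def using norm_ge_zero[of "b - a"] assms by linarith
  moreover have "vec_angle u v \<le> \<theta>" for u v
    using vec_angle_le_pi[of u v] assms by simp
  ultimately show ?thesis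
    by (simp add: dccp_def)
qed

lemma dccp_extension_starts_ends:
  assumes ext: "dccp \<theta> l ((u - U) # ps @ [v + V])"
    and ps: "ps \<noteq> []" "hd ps = u" "last ps = v"
  shows "dccp \<theta> l ps \<and> starts_at \<theta> l ps u U \<and> ends_at \<theta> l ps v V"
proof -
  have start: "dccp \<theta> l ((u - U) # ps)"
    using dccp_take[OF ext, of "length ps + 1"] by simp
  have "dccp \<theta> l (ps @ [v + V])"
    using dccp_drop[OF ext, of 1] by simp
  moreover have "dccp \<theta> l ps"
    using dccp_drop[OF start, of 1] by simp
  ultimately show ?thesis
    using start ps by (simp add: starts_at_def ends_at_def)
qed

lemma upt_add_2_eq: "[0..<n + 2] = 0 # map Suc [0..<n] @ [n + 1]"
  by (simp add: map_Suc_upt upt_conv_Cons)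

definition sample_times :: "real \<Rightarrow> real \<Rightarrow> (nat \<Rightarrow> real) \<Rightarrow> nat \<Rightarrow> bool" where
  "sample_times \<theta> L T N \<longleftrightarrow> 2 \<le> N \<and> T 0 = 0 \<and> T (N - 1) = L \<and>
     (\<forall>j. j + 1 < N \<longrightarrow> 0 < T (Suc j) - T j \<and> T (Suc j) - T j \<le> \<theta>) \<and>
     (\<forall>j. j + 1 < N \<longrightarrow> T (Suc j) - T j < \<theta> \<longrightarrow>
        (j = 0 \<or> j + 2 = N) \<and> 2 * (T (Suc j) - T j) \<le> \<theta>) \<and>
     (\<forall>j. j + 2 < N \<longrightarrow> T (Suc j) - T j = \<theta> \<or> T (Suc (Suc j)) - T (Suc j) = \<theta>)"

text \<open>Vertex \<open>k\<close> carries the parameter \<open>time k\<close>, so a virtual edge spans a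
  parameter interval of length zero.\<close>

locale sampled_admissible_path =
  fixes L \<theta> l :: real and \<gamma> D :: "real \<Rightarrow> real^2" and T :: "nat \<Rightarrow> real" and N :: nat
  assumes admissible: "admissible L \<gamma> D"
    and sample_times: "sample_times \<theta> L T N"
    and theta_le_pi: "\<theta> \<le> pi"
    and l_pos: "0 < l"
    and l_le_chord: "l \<le> 2 * sin (\<theta> / 2)"
begin

definition vertex :: "nat \<Rightarrow> real^2" where
  "vertex k = (if k = 0 then \<gamma> 0 - l *\<^sub>R D 0 else if k \<le> N then \<gamma> (T (k - 1)) else \<gamma> L + l *\<^sub>R D L)"

definition time :: "nat \<Rightarrow> real" where
  "time k = (if k = 0 then 0 else if k \<le> N then T (k - 1) else L)"

abbreviation edge :: "nat \<Rightarrow> real^2" where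
  "edge k \<equiv> vertex (Suc k) - vertex k"

abbreviation gap :: "nat \<Rightarrow> real" where
  "gap k \<equiv> time (Suc k) - time k"

lemma N_ge_2: "2 \<le> N"
  and T_0: "T 0 = 0"
  and T_last: "T (N - 1) = L"
  and sample_gap: "j + 1 < N \<Longrightarrow> 0 < T (Suc j) - T j \<and> T (Suc j) - T j \<le> \<theta>"
  and short_sample_gap: "j + 1 < N \<Longrightarrow> T (Suc j) - T j < \<theta> \<Longrightarrow>
      (j = 0 \<or> j + 2 = N) \<and> 2 * (T (Suc j) - T j) \<le> \<theta>"
  and sample_gap_adjacent: "j + 2 < N \<Longrightarrow> T (Suc j) - T j = \<theta> \<or> T (Suc (Suc j)) - T (Suc j) = \<theta>"
  using sample_times by (auto simp: sample_times_def)

lemma theta_pos: "0 < \<theta>"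
  using sample_gap[of 0] N_ge_2 by simp

lemma sample_time_mono: "j \<le> k \<Longrightarrow> k < N \<Longrightarrow> T j \<le> T k"
proof (induction k rule: dec_induct)
  case (step k)
  then show ?case
    using sample_gap[of k] by simp
qed simp

lemma time_range: "0 \<le> time k \<and> time k \<le> L"
  using sample_time_mono[of 0 "k - 1"] sample_time_mono[of "k - 1" "N - 1"]
    sample_time_mono[of 0 "N - 1"] T_0 T_last N_ge_2
  by (simp add: time_def)

lemma unit_D_time: "norm (D (time k)) = 1"
  using admissible_unit_derivative[OF admissible] time_range by simp

lemma gap_virtual: "gap 0 = 0" "gap N = 0"
  using T_0 T_last N_ge_2 by (simp_all add: time_def)

lemma gap_real: "0 < k \<Longrightarrow> k < N \<Longrightarrow> gap k = T k - T (k - 1)"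
  by (simp add: time_def)

lemma edge_real: "0 < k \<Longrightarrow> k < N \<Longrightarrow> edge k = \<gamma> (T k) - \<gamma> (T (k - 1))"
  by (simp add: vertex_def)

lemma edge_virtual: "edge 0 = l *\<^sub>R D (time 0)" "edge N = l *\<^sub>R D (time N)"
  using T_0 T_last N_ge_2 by (simp_all add: vertex_def time_def)

lemma gap_bounds: "0 \<le> gap k \<and> gap k \<le> \<theta>"
proof (cases "0 < k \<and> k < N")
  case True
  then show ?thesis
    using gap_real[of k] sample_gap[of "k - 1"] by simp
next
  case False
  then have "gap k = 0"
    using gap_virtual by (cases "k = 0") (auto simp: time_def)
  then show ?thesis
    using theta_pos by simp
qed

lemma edge_cone:
  assumes "\<theta> < pi" "k \<le> N"
  shows "vec_angle (D (time k)) (edge k) \<le> gap k / 2"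
    and "vec_angle (D (time (Suc k))) (edge k) \<le> gap k / 2"
proof -
  have "vec_angle (D (time k)) (edge k) \<le> gap k / 2 \<and>
        vec_angle (D (time (Suc k))) (edge k) \<le> gap k / 2"
  proof (cases "k = 0 \<or> k = N")
    case True
    have "D (time k) \<noteq> 0"
      using unit_D_time[of k] by auto
    then have "vec_angle (D (time k)) (l *\<^sub>R D (time k)) = 0"
      using l_pos by (simp add: vec_angle_scaleR_right vec_angle_refl)
    with True show ?thesis
      using edge_virtual gap_virtual by auto
  next
    case False
    then have k: "0 < k" "k < N" using assms by auto
    have "T (k - 1) < T k" "T k - T (k - 1) < pi"
      using sample_gap[of "k - 1"] k assms by auto
    moreover have "0 \<le> T (k - 1)" "T k \<le> L"
      using time_range[of k] time_range[of "Suc k"] k by (simp_all add: time_def)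
    ultimately show ?thesis
      using chord_start(2)[OF admissible] chord_end(2)[OF admissible] k
      by (simp add: edge_real gap_real) (simp add: time_def)
  qed
  then show "vec_angle (D (time k)) (edge k) \<le> gap k / 2"
    and "vec_angle (D (time (Suc k))) (edge k) \<le> gap k / 2"
    by auto
qed

lemma short_edge_gap:
  assumes "k \<le> N" "norm (edge k) < l"
  shows "0 < k \<and> k < N \<and> gap k < \<theta>"
proof -
  have "norm (edge k) = l" if "k = 0 \<or> k = N"
    using that edge_virtual unit_D_time l_pos by auto
  then have real: "0 < k \<and> k < N"
    using assms by (cases "k = 0 \<or> k = N") auto
  have "gap k \<noteq> \<theta>"
  proof
    assume gap: "gap k = \<theta>"
    have "0 \<le> T (k - 1)" "T k \<le> L"
      using time_range[of k] time_range[of "Suc k"] real by (simp_all add: time_def)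
    then have "2 * sin (\<theta> / 2) \<le> norm (edge k)"
      using chord_length_ge[OF admissible, of "T (k - 1)" "T k"] gap real theta_le_pi theta_pos
      by (simp add: edge_real gap_real)
    then show False
      using assms l_le_chord by simp
  qed
  then show ?thesis
    using real gap_bounds[of k] by auto
qed

lemma short_edge_at_end:
  assumes "k \<le> N" "norm (edge k) < l"
  shows "(k = 1 \<or> k + 1 = N) \<and> 2 * gap k \<le> \<theta>"
  using short_edge_gap[OF assms] short_sample_gap[of "k - 1"] by (auto simp: gap_real)

lemma turn_le:
  assumes "i < N"
  shows "vec_angle (edge i) (edge (Suc i)) \<le> \<theta>"
proof (cases "\<theta> < pi")
  case True
  have "vec_angle (edge i) (edge (Suc i))
      \<le> vec_angle (edge i) (D (time (Suc i))) + vec_angle (D (time (Suc i))) (edge (Suc i))"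
    by (rule vec_angle_triangle)
  also have "\<dots> \<le> gap i / 2 + gap (Suc i) / 2"
    using edge_cone(2)[OF True, of i] edge_cone(1)[OF True, of "Suc i"] assms
    by (intro add_mono) (simp_all add: vec_angle_commute)
  also have "\<dots> \<le> \<theta>"
    using gap_bounds[of i] gap_bounds[of "Suc i"] by (simp add: field_simps)
  finally show ?thesis .
next
  case False
  then show ?thesis
    using vec_angle_le_pi[of "edge i" "edge (Suc i)"] by simp
qed

lemma not_adjacent_short:
  assumes "i + 1 \<le> N"
  shows "\<not> (norm (edge i) < l \<and> norm (edge (Suc i)) < l)"
proof
  assume "norm (edge i) < l \<and> norm (edge (Suc i)) < l"
  then have "0 < i" "Suc i < N" "gap i < \<theta>" "gap (Suc i) < \<theta>"
    using short_edge_gap[of i] short_edge_gap[of "Suc i"] assms by auto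
  then show False
    using sample_gap_adjacent[of "i - 1"] by (simp add: gap_real)
qed

lemma short_edge_turn_le:
  assumes i: "i + 2 \<le> N" and short: "norm (edge (Suc i)) < l"
  shows "vec_angle (edge i) (edge (Suc (Suc i))) \<le> \<theta>"
proof (cases "\<theta> < pi")
  case True
  have gap_short: "gap (Suc i) < \<theta>" "i = 0 \<or> i + 2 = N" "2 * gap (Suc i) \<le> \<theta>"
    using short_edge_gap[OF _ short] short_edge_at_end[OF _ short] i by auto
  have "vec_angle (edge i) (edge (Suc (Suc i)))
      \<le> vec_angle (edge i) (D (time (Suc i))) + vec_angle (D (time (Suc i))) (D (time (Suc (Suc i))))
         + vec_angle (D (time (Suc (Suc i)))) (edge (Suc (Suc i)))"
    using vec_angle_triangle[where v = "edge i" and u = "D (time (Suc i))" and w = "edge (Suc (Suc i))"]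
      vec_angle_triangle[where v = "D (time (Suc i))" and u = "D (time (Suc (Suc i)))"
        and w = "edge (Suc (Suc i))"]
    by simp
  also have "\<dots> \<le> gap i / 2 + gap (Suc i) + gap (Suc (Suc i)) / 2"
  proof (intro add_mono)
    show "vec_angle (edge i) (D (time (Suc i))) \<le> gap i / 2"
      using edge_cone(2)[OF True, of i] i by (simp add: vec_angle_commute)
    show "vec_angle (D (time (Suc i))) (D (time (Suc (Suc i)))) \<le> gap (Suc i)"
      using admissible_angle_le[OF admissible, of "time (Suc i)" "time (Suc (Suc i))"] time_range
        gap_bounds[of "Suc i"] gap_short True by simp
    show "vec_angle (D (time (Suc (Suc i)))) (edge (Suc (Suc i))) \<le> gap (Suc (Suc i)) / 2"
      using edge_cone(1)[OF True, of "Suc (Suc i)"] i by simp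
  qed
  also have "\<dots> \<le> \<theta>"
  proof -
    have "gap i = 0 \<or> gap (Suc (Suc i)) = 0"
      using gap_short gap_virtual by auto
    then show ?thesis
      using gap_short gap_bounds[of i] gap_bounds[of "Suc (Suc i)"] by (auto simp: field_simps)
  qed
  finally show ?thesis .
next
  case False
  then show ?thesis
    using vec_angle_le_pi[of "edge i" "edge (Suc (Suc i))"] by simp
qed

lemma dccp_vertices: "dccp \<theta> l (map vertex [0..<N + 2])"
  unfolding dccp_def short_edge_def
  using turn_le not_adjacent_short short_edge_turn_le by (auto simp: gr0_conv_Suc simp del: upt_Suc)

lemma vertices_eq:
  "map vertex [0..<N + 2] = (\<gamma> 0 - l *\<^sub>R D 0) # map (\<lambda>j. \<gamma> (T j)) [0..<N] @ [\<gamma> L + l *\<^sub>R D L]"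
proof -
  have "map (vertex \<circ> Suc) [0..<N] = map (\<lambda>j. \<gamma> (T j)) [0..<N]"
    by (rule map_cong) (auto simp: vertex_def)
  then show ?thesis
    unfolding upt_add_2_eq by (simp add: vertex_def del: upt_Suc)
qed

end

lemma sample_times_endpoints:
  assumes "sample_times \<theta> L T N"
  shows "map (\<lambda>j. \<gamma> (T j)) [0..<N] \<noteq> [] \<and> hd (map (\<lambda>j. \<gamma> (T j)) [0..<N]) = \<gamma> 0
    \<and> last (map (\<lambda>j. \<gamma> (T j)) [0..<N]) = \<gamma> L"
  using assms by (simp add: sample_times_def hd_map last_map)

lemma sample_times_uniform:
  assumes "0 < \<theta>" "1 \<le> m" "L = real m * \<theta>"
  shows "sample_times \<theta> L (\<lambda>j. real j * \<theta>) (m + 1)"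
  using assms by (simp add: sample_times_def algebra_simps)

lemma sample_times_offset:
  assumes "0 < \<delta>" "\<delta> < \<theta>" "1 \<le> m" "L = real m * \<theta> + \<delta>"
  shows "sample_times \<theta> L
    (\<lambda>j. if j = 0 then 0 else if j \<le> m + 1 then \<delta> / 2 + real (j - 1) * \<theta> else L) (m + 3)"
    (is "sample_times \<theta> L ?T (m + 3)")
proof -
  have gap: "?T (Suc j) - ?T j = (if j = 0 \<or> j = m + 1 then \<delta> / 2 else \<theta>)" if "j \<le> m + 1" for j
    using that assms by (cases "j = m + 1") (auto simp: algebra_simps)
  show ?thesis
    unfolding sample_times_def
  proof (intro conjI allI impI)
    fix j
    assume "j + 1 < m + 3"
    then show "0 < ?T (Suc j) - ?T j" "?T (Suc j) - ?T j \<le> \<theta>"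
      using gap[of j] assms by auto
  next
    fix j
    assume "j + 1 < m + 3" "?T (Suc j) - ?T j < \<theta>"
    then show "j = 0 \<or> j + 2 = m + 3" "2 * (?T (Suc j) - ?T j) \<le> \<theta>"
      using gap[of j] assms by (auto split: if_splits)
  next
    fix j
    assume "j + 2 < m + 3"
    then show "?T (Suc j) - ?T j = \<theta> \<or> ?T (Suc (Suc j)) - ?T (Suc j) = \<theta>"
      using gap[of j] gap[of "Suc j"] assms by (cases j) auto
  qed (use assms in auto)
qed

lemma discretization_sample_times:
  assumes "0 < \<theta>" "\<theta> < L"
  obtains T N where "discretization \<theta> L \<gamma> = map (\<lambda>j. \<gamma> (T j)) [0..<N]" "sample_times \<theta> L T N"
proof -
  define m where "m = nat \<lfloor>L / \<theta>\<rfloor>"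
  define \<delta> where "\<delta> = L - real m * \<theta>"
  have "1 \<le> \<lfloor>L / \<theta>\<rfloor>"
    using assms by simp
  then have m: "1 \<le> m" "real m \<le> L / \<theta>" "L / \<theta> < real m + 1"
    unfolding m_def by linarith+
  then have \<delta>: "0 \<le> \<delta>" "\<delta> < \<theta>"
    using assms by (simp_all add: \<delta>_def field_simps)
  have L: "L = real m * \<theta> + \<delta>"
    by (simp add: \<delta>_def)
  have disc: "discretization \<theta> L \<gamma> = (if \<delta> = 0 then map (\<lambda>i. \<gamma> (real i * \<theta>)) [0..<m + 1]
      else [\<gamma> 0] @ map (\<lambda>i. \<gamma> (\<delta> / 2 + real i * \<theta>)) [0..<m + 1] @ [\<gamma> L])"
    by (simp add: discretization_def m_def \<delta>_def Let_def)
  show ?thesis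
  proof (cases "\<delta> = 0")
    case True
    then show ?thesis
      using that[OF _ sample_times_uniform] disc assms m L by simp
  next
    case False
    define T where "T j = (if j = 0 then 0 else if j \<le> m + 1 then \<delta> / 2 + real (j - 1) * \<theta> else L)"
      for j
    have "map (\<lambda>j. \<gamma> (T (Suc j))) [0..<m + 1] = map (\<lambda>i. \<gamma> (\<delta> / 2 + real i * \<theta>)) [0..<m + 1]"
      by (rule map_cong) (auto simp: T_def)
    moreover have "m + 3 = (m + 1) + 2"
      by simp
    ultimately have "map (\<lambda>j. \<gamma> (T j)) [0..<m + 3]
        = [\<gamma> 0] @ map (\<lambda>i. \<gamma> (\<delta> / 2 + real i * \<theta>)) [0..<m + 1] @ [\<gamma> L]"
      unfolding \<open>m + 3 = (m + 1) + 2\<close> upt_add_2_eq by (simp add: T_def o_def del: upt_Suc)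
    moreover have "sample_times \<theta> L T (m + 3)"
      unfolding T_def using sample_times_offset False \<delta> m L by auto
    ultimately have "discretization \<theta> L \<gamma> = map (\<lambda>j. \<gamma> (T j)) [0..<m + 3]"
      "sample_times \<theta> L T (m + 3)"
      using disc False by simp_all
    then show ?thesis
      by (rule that)
  qed
qed

theorem lemma17:
  fixes L :: real and \<gamma> D :: "real \<Rightarrow> real^2" and n :: nat
  assumes "admissible L \<gamma> D"
    and "0 < n"
    and "2 * pi / real n < L"
  shows "dccp (2 * pi / real n) (2 * sin (pi / real n)) (discretization (2 * pi / real n) L \<gamma>)
       \<and> starts_at (2 * pi / real n) (2 * sin (pi / real n)) (discretization (2 * pi / real n) L \<gamma>)
           (\<gamma> 0) ((2 * sin (pi / real n)) *\<^sub>R D 0)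
       \<and> ends_at (2 * pi / real n) (2 * sin (pi / real n)) (discretization (2 * pi / real n) L \<gamma>)
           (\<gamma> L) ((2 * sin (pi / real n)) *\<^sub>R D L)"
proof -
  define \<theta> l where "\<theta> = 2 * pi / real n" and "l = 2 * sin (pi / real n)"
  have \<theta>: "0 < \<theta>" "\<theta> < L"
    using assms by (simp_all add: \<theta>_def)
  obtain T N where disc: "discretization \<theta> L \<gamma> = map (\<lambda>j. \<gamma> (T j)) [0..<N]"
    and times: "sample_times \<theta> L T N"
    using discretization_sample_times[OF \<theta>] .
  have "dccp \<theta> l ((\<gamma> 0 - l *\<^sub>R D 0) # map (\<lambda>j. \<gamma> (T j)) [0..<N] @ [\<gamma> L + l *\<^sub>R D L])"
  proof (cases "n = 1")
    case True
    then show ?thesis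
      by (intro dccp_of_pi_le) (simp_all add: \<theta>_def l_def)
  next
    case False
    then have n: "2 \<le> real n"
      using assms(2) by linarith
    have "pi / real n \<le> pi / 2"
      using n by (intro divide_left_mono) auto
    then have "0 < pi / real n" "pi / real n < pi"
      using assms(2) pi_gt_zero by (simp, linarith)
    then have "0 < l"
      by (simp add: l_def sin_gt_zero)
    moreover have "\<theta> \<le> pi"
      using n by (simp add: \<theta>_def field_simps)
    ultimately interpret sampled_admissible_path L \<theta> l \<gamma> D T N
      using assms(1) times by unfold_locales (simp_all add: \<theta>_def l_def)
    show ?thesis
      using dccp_vertices unfolding vertices_eq .
  qed
  then have "dccp \<theta> l (discretization \<theta> L \<gamma>)
      \<and> starts_at \<theta> l (discretization \<theta> L \<gamma>) (\<gamma> 0) (l *\<^sub>R D 0)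
      \<and> ends_at \<theta> l (discretization \<theta> L \<gamma>) (\<gamma> L) (l *\<^sub>R D L)"
    unfolding disc using sample_times_endpoints[OF times, where \<gamma> = \<gamma>]
    by (intro dccp_extension_starts_ends) auto
  then show ?thesis
    by (simp only: \<theta>_def l_def)
qed

end
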